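(* For every integer $m\geq 2$ and every integer $n\geq 3$, the graph $mTL_n$ (the disjoint union of $m$ copies of the triangular ladder $TL_n$) is $C_3$-supermagic.
   Context: All graphs are finite and simple. For a graph $H$, a graph $G=(V,E)$ has an $H$-covering if every edge of $G$ belongs to a subgraph of $G$ isomorphic to $H$. For such $G$, an $H$-magic labeling is a bijection $\lambda: V\cup E\to\{1,2,\dots,|V|+|E|\}$ for which there is a constant $c$ such that for every subgraph $H'=(V',E')$ of $G$ isomorphic to $H$, $\sum_{v\in V'}\lambda(v)+\sum_{e\in E'}\lambda(e)=c$. It is $H$-supermagic if moreover $\{\lambda(v):v\in V\}=\{1,\dots,|V|\}$; $G$ is $H$-supermagic if it admits such a labeling. $C_k$ is the cycle of length $k$. $mG$ denotes the disjoint union of $m$ copies of $G$. The triangular ladder $TL_n$ has vertices $u_i,v_i$ ($1\le i\le n$) and edges $u_iv_i$ ($1\le i\le n$), and $u_iu_{i+1}$, $v_iv_{i+1}$, $u_{i+1}v_i$ ($1\le i\le n-1$). *)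

theory Defs
  imports Main
begin

type_synonym 'a graph = "'a set \<times> 'a set set"

definition simple_graph :: "'a graph \<Rightarrow> bool" where
  "simple_graph G \<longleftrightarrow> finite (fst G) \<and>
     (\<forall>e\<in>snd G. \<exists>u v. e = {u, v} \<and> u \<noteq> v \<and> u \<in> fst G \<and> v \<in> fst G)"

definition subgraph :: "'a graph \<Rightarrow> 'a graph \<Rightarrow> bool" where
  "subgraph H G \<longleftrightarrow> fst H \<subseteq> fst G \<and> snd H \<subseteq> snd G \<and> (\<forall>e\<in>snd H. e \<subseteq> fst H)"

definition graph_iso :: "'a graph \<Rightarrow> 'b graph \<Rightarrow> bool" where
  "graph_iso G H \<longleftrightarrow> (\<exists>f. bij_betw f (fst G) (fst H) \<and>
     (\<forall>u\<in>fst G. \<forall>v\<in>fst G. {u, v} \<in> snd G \<longleftrightarrow> {f u, f v} \<in> snd H))"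

definition H_covering :: "'b graph \<Rightarrow> 'a graph \<Rightarrow> bool" where
  "H_covering H G \<longleftrightarrow> (\<forall>e\<in>snd G. \<exists>G'. subgraph G' G \<and> graph_iso G' H \<and> e \<in> snd G')"

text \<open>Total labeling: vertices are tagged Inl, edges Inr.\<close>
definition H_magic_labeling :: "'b graph \<Rightarrow> 'a graph \<Rightarrow> ('a + 'a set \<Rightarrow> nat) \<Rightarrow> bool" where
  "H_magic_labeling H G lam \<longleftrightarrow>
     bij_betw lam (Inl ` fst G \<union> Inr ` snd G) {1..card (fst G) + card (snd G)} \<and>
     (\<exists>c. \<forall>G'. subgraph G' G \<and> graph_iso G' H \<longrightarrow>
        (\<Sum>v\<in>fst G'. lam (Inl v)) + (\<Sum>e\<in>snd G'. lam (Inr e)) = c)"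

definition H_supermagic_labeling :: "'b graph \<Rightarrow> 'a graph \<Rightarrow> ('a + 'a set \<Rightarrow> nat) \<Rightarrow> bool" where
  "H_supermagic_labeling H G lam \<longleftrightarrow>
     H_magic_labeling H G lam \<and> lam ` Inl ` fst G = {1..card (fst G)}"

definition H_supermagic :: "'b graph \<Rightarrow> 'a graph \<Rightarrow> bool" where
  "H_supermagic H G \<longleftrightarrow> H_covering H G \<and> (\<exists>lam. H_supermagic_labeling H G lam)"

definition cycle_graph :: "nat \<Rightarrow> nat graph" where
  "cycle_graph k = ({0..<k}, {{i, (i + 1) mod k} | i. i < k})"

text \<open>Triangular ladder TL_n: u_i = (False, i), v_i = (True, i), 1 \<le> i \<le> n.\<close>
definition triangular_ladder :: "nat \<Rightarrow> (bool \<times> nat) graph" where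
  "triangular_ladder n =
    ({(b, i). i \<in> {1..n}},
     {{(False, i), (True, i)} | i. 1 \<le> i \<and> i \<le> n} \<union>
     {{(False, i), (False, i + 1)} | i. 1 \<le> i \<and> i \<le> n - 1} \<union>
     {{(True, i), (True, i + 1)} | i. 1 \<le> i \<and> i \<le> n - 1} \<union>
     {{(False, i + 1), (True, i)} | i. 1 \<le> i \<and> i \<le> n - 1})"

definition copies :: "nat \<Rightarrow> 'a graph \<Rightarrow> (nat \<times> 'a) graph" where
  "copies m G = ({(j, x). j < m \<and> x \<in> fst G},
                  {(\<lambda>x. (j, x)) ` e | j e. j < m \<and> e \<in> snd G})"

end

theory Submission
  imports Defs
begin

text \<open>Numbering the vertices \<open>u\<^sub>1, v\<^sub>1, u\<^sub>2, v\<^sub>2, \<dots>\<close> of \<open>TL\<^sub>n\<close> as \<open>0, \<dots>, 2n - 1\<close> turns the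
  triangular ladder into the square of the path on \<open>N = 2n\<close> vertices: \<open>p\<close> is adjacent to
  \<open>p + 1\<close> and \<open>p + 2\<close>, and the triangles are exactly the sets \<open>{p, p + 1, p + 2}\<close>.
  Supermagic labelings survive injective renaming of vertices, so it suffices to label \<open>m\<close>
  copies of this graph. Vertex \<open>p\<close> of copy \<open>j\<close> gets \<open>1 + mp + j\<close>; the edges \<open>{p, p + 1}\<close>
  get the next \<open>m(N - 1)\<close> labels and the edges \<open>{p, p + 2}\<close> the last \<open>m(N - 2)\<close>, both in
  decreasing order of \<open>mp + j\<close>. On the triangle \<open>{p, p + 1, p + 2}\<close> of copy \<open>j\<close> the vertex
  labels then sum to a constant plus \<open>3(mp + j)\<close> and the edge labels to a constant minus
  \<open>3(mp + j)\<close>.\<close>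

section \<open>Renaming vertices\<close>

definition graph_image :: "('a \<Rightarrow> 'b) \<Rightarrow> 'a graph \<Rightarrow> 'b graph" where
  "graph_image f G = (f ` fst G, (`) f ` snd G)"

lemma subgraph_graph_image: "subgraph H G \<Longrightarrow> subgraph (graph_image f H) (graph_image f G)"
  unfolding subgraph_def graph_image_def by (auto simp: image_mono)

lemma doubleton_mem_image_edges_iff:
  assumes "inj_on f (fst G)" "\<forall>e\<in>snd G. e \<subseteq> fst G" "u \<in> fst G" "v \<in> fst G"
  shows "{f u, f v} \<in> snd (graph_image f G) \<longleftrightarrow> {u, v} \<in> snd G"
proof
  assume "{f u, f v} \<in> snd (graph_image f G)"
  then obtain e where "e \<in> snd G" "f ` e = f ` {u, v}"
    unfolding graph_image_def by auto
  with assms have "e = {u, v}"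
    using inj_on_image_eq_iff[OF assms(1), of e "{u, v}"] by auto
  with \<open>e \<in> snd G\<close> show "{u, v} \<in> snd G" by simp
qed (auto simp: graph_image_def intro!: image_eqI[where x = "{u, v}"])

lemma graph_iso_graph_image_iff:
  assumes inj: "inj_on f (fst G)" and edges: "\<forall>e\<in>snd G. e \<subseteq> fst G"
  shows "graph_iso (graph_image f G) H \<longleftrightarrow> graph_iso G H"
proof
  have f_bij: "bij_betw f (fst G) (fst (graph_image f G))"
    using inj by (simp add: graph_image_def inj_on_imp_bij_betw)
  note edge_iff = doubleton_mem_image_edges_iff[OF inj edges]
  show "graph_iso G H" if "graph_iso (graph_image f G) H"
  proof -
    from that obtain g where "bij_betw g (fst (graph_image f G)) (fst H)"
      and g_edges: "\<forall>u\<in>fst (graph_image f G). \<forall>v\<in>fst (graph_image f G).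
                      {u, v} \<in> snd (graph_image f G) \<longleftrightarrow> {g u, g v} \<in> snd H"
      unfolding graph_iso_def by blast
    then have "bij_betw (g \<circ> f) (fst G) (fst H)"
      using f_bij by (blast intro: bij_betw_trans)
    moreover have "\<forall>u\<in>fst G. \<forall>v\<in>fst G. {u, v} \<in> snd G \<longleftrightarrow> {(g \<circ> f) u, (g \<circ> f) v} \<in> snd H"
      using g_edges edge_iff by (simp add: graph_image_def)
    ultimately show ?thesis unfolding graph_iso_def by blast
  qed
  show "graph_iso (graph_image f G) H" if "graph_iso G H"
  proof -
    from that obtain g where "bij_betw g (fst G) (fst H)"
      and g_edges: "\<forall>u\<in>fst G. \<forall>v\<in>fst G. {u, v} \<in> snd G \<longleftrightarrow> {g u, g v} \<in> snd H"
      unfolding graph_iso_def by blast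
    then have "bij_betw (g \<circ> inv_into (fst G) f) (fst (graph_image f G)) (fst H)"
      using bij_betw_inv_into[OF f_bij] by (blast intro: bij_betw_trans)
    moreover have "\<forall>u\<in>fst (graph_image f G). \<forall>v\<in>fst (graph_image f G).
        {u, v} \<in> snd (graph_image f G) \<longleftrightarrow>
        {(g \<circ> inv_into (fst G) f) u, (g \<circ> inv_into (fst G) f) v} \<in> snd H"
      using g_edges edge_iff inj by (auto simp: graph_image_def)
    ultimately show ?thesis unfolding graph_iso_def by blast
  qed
qed

lemma subgraph_of_graph_image:
  assumes inj: "inj_on f (fst G)" and edges: "\<forall>e\<in>snd G. e \<subseteq> fst G"
    and "subgraph H (graph_image f G)"
  obtains H' where "subgraph H' G" "H = graph_image f H'"
proof
  let ?g = "inv_into (fst G) f"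
  have V: "fst H \<subseteq> f ` fst G" and E: "snd H \<subseteq> (`) f ` snd G" and HE: "\<forall>e\<in>snd H. e \<subseteq> fst H"
    using assms(3) unfolding subgraph_def graph_image_def by auto
  have gf_edge: "?g ` f ` e = e" if "e \<in> snd G" for e
    using that edges inj by (force simp: image_image)
  show "subgraph (graph_image ?g H) G"
    unfolding subgraph_def graph_image_def using V E HE gf_edge
    by (auto intro: inv_into_into simp: image_mono)
  have fg: "(\<lambda>x. f (?g x)) ` A = A" if "A \<subseteq> fst H" for A
    using that V by (force simp: f_inv_into_f)
  then have "(`) (\<lambda>x. f (?g x)) ` snd H = snd H"
    using HE by (simp cong: image_cong)
  then show "H = graph_image f (graph_image ?g H)"
    using fg[of "fst H"] by (simp add: graph_image_def image_image prod_eq_iff)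
qed

lemma H_covering_graph_image:
  assumes cov: "H_covering H G" and inj: "inj_on f (fst G)" and edges: "\<forall>e\<in>snd G. e \<subseteq> fst G"
  shows "H_covering H (graph_image f G)"
  unfolding H_covering_def
proof
  fix e' assume "e' \<in> snd (graph_image f G)"
  then obtain e where "e \<in> snd G" "e' = f ` e"
    by (auto simp: graph_image_def)
  with cov obtain G' where G': "subgraph G' G" "graph_iso G' H" "e \<in> snd G'"
    unfolding H_covering_def by blast
  have "inj_on f (fst G')" "\<forall>e\<in>snd G'. e \<subseteq> fst G'"
    using G'(1) inj edges by (auto simp: subgraph_def intro: inj_on_subset)
  then have "graph_iso (graph_image f G') H"
    using G'(2) graph_iso_graph_image_iff by blast
  moreover have "e' \<in> snd (graph_image f G')"
    using G'(3) \<open>e' = f ` e\<close> by (simp add: graph_image_def)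
  ultimately show "\<exists>G''. subgraph G'' (graph_image f G) \<and> graph_iso G'' H \<and> e' \<in> snd G''"
    using subgraph_graph_image[OF G'(1)] by blast
qed

lemma bij_betw_map_sum_inv_into:
  assumes inj: "inj_on f (fst G)" and edges: "\<forall>e\<in>snd G. e \<subseteq> fst G"
  defines "g \<equiv> inv_into (fst G) f"
  shows "bij_betw (map_sum g ((`) g))
    (Inl ` fst (graph_image f G) \<union> Inr ` snd (graph_image f G)) (Inl ` fst G \<union> Inr ` snd G)"
proof (rule bij_betw_byWitness[where f' = "map_sum f ((`) f)"])
  have gf: "g (f v) = v" if "v \<in> fst G" for v
    using inj that by (simp add: g_def)
  have gf_edge: "g ` f ` e = e" if "e \<in> snd G" for e
    using inj edges that by (simp add: g_def inv_into_image_cancel)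
  show "\<forall>z\<in>Inl ` fst (graph_image f G) \<union> Inr ` snd (graph_image f G).
      map_sum f ((`) f) (map_sum g ((`) g) z) = z"
    by (auto simp: graph_image_def gf gf_edge)
  show "\<forall>z\<in>Inl ` fst G \<union> Inr ` snd G. map_sum g ((`) g) (map_sum f ((`) f) z) = z"
    by (auto simp: gf gf_edge)
  show "map_sum g ((`) g) ` (Inl ` fst (graph_image f G) \<union> Inr ` snd (graph_image f G))
      \<subseteq> Inl ` fst G \<union> Inr ` snd G"
    by (auto simp: graph_image_def gf gf_edge)
  show "map_sum f ((`) f) ` (Inl ` fst G \<union> Inr ` snd G)
      \<subseteq> Inl ` fst (graph_image f G) \<union> Inr ` snd (graph_image f G)"
    by (auto simp: graph_image_def)
qed

lemma weight_graph_image: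
  assumes inj: "inj_on f (fst G)" and edges: "\<forall>e\<in>snd G. e \<subseteq> fst G" and sub: "subgraph G' G"
  defines "g \<equiv> inv_into (fst G) f"
  shows "(\<Sum>v\<in>fst (graph_image f G'). lam (Inl (g v))) + (\<Sum>e\<in>snd (graph_image f G'). lam (Inr (g ` e)))
    = (\<Sum>v\<in>fst G'. lam (Inl v)) + (\<Sum>e\<in>snd G'. lam (Inr e))"
proof -
  have V': "fst G' \<subseteq> fst G" and E': "snd G' \<subseteq> snd G"
    using sub unfolding subgraph_def by auto
  have inj': "inj_on f (fst G')"
    using inj V' by (rule inj_on_subset)
  have inj_edges: "inj_on ((`) f) (snd G')"
    by (rule inj_on_image, rule inj_on_subset[OF inj]) (use edges E' in blast)
  have "(\<Sum>v\<in>fst (graph_image f G'). lam (Inl (g v))) = (\<Sum>v\<in>fst G'. lam (Inl v))"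
    unfolding graph_image_def fst_conv sum.reindex[OF inj']
    using inj V' by (intro sum.cong) (auto simp: g_def)
  moreover have "(\<Sum>e\<in>snd (graph_image f G'). lam (Inr (g ` e))) = (\<Sum>e\<in>snd G'. lam (Inr e))"
    unfolding graph_image_def snd_conv sum.reindex[OF inj_edges]
    using inj edges E' by (intro sum.cong) (auto simp: g_def inv_into_image_cancel)
  ultimately show ?thesis
    by simp
qed

lemma H_supermagic_labeling_graph_image:
  assumes lam: "H_supermagic_labeling H G lam"
    and inj: "inj_on f (fst G)" and edges: "\<forall>e\<in>snd G. e \<subseteq> fst G"
  defines "g \<equiv> inv_into (fst G) f"
  shows "H_supermagic_labeling H (graph_image f G) (lam \<circ> map_sum g ((`) g))"
proof -
  let ?G = "graph_image f G" and ?lam' = "lam \<circ> map_sum g ((`) g)"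
  have inj_edges: "inj_on ((`) f) (snd G)"
    by (rule inj_on_image, rule inj_on_subset[OF inj]) (use edges in blast)
  have card_eq: "card (fst ?G) = card (fst G)" "card (snd ?G) = card (snd G)"
    using inj inj_edges by (simp_all add: graph_image_def card_image)
  have lam_bij: "bij_betw lam (Inl ` fst G \<union> Inr ` snd G) {1..card (fst G) + card (snd G)}"
    and lam_V: "lam ` Inl ` fst G = {1..card (fst G)}"
    and magic: "\<exists>c. \<forall>G'. subgraph G' G \<and> graph_iso G' H \<longrightarrow>
        (\<Sum>v\<in>fst G'. lam (Inl v)) + (\<Sum>e\<in>snd G'. lam (Inr e)) = c"
    using lam unfolding H_supermagic_labeling_def H_magic_labeling_def by blast+
  have "bij_betw ?lam' (Inl ` fst ?G \<union> Inr ` snd ?G) {1..card (fst ?G) + card (snd ?G)}"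
    unfolding card_eq g_def using bij_betw_map_sum_inv_into[OF inj edges] lam_bij by (rule bij_betw_trans)
  moreover have "?lam' ` Inl ` fst ?G = {1..card (fst ?G)}"
    using lam_V inj unfolding card_eq by (simp add: graph_image_def image_image g_def cong: image_cong)
  moreover obtain c where c: "\<And>G'. subgraph G' G \<Longrightarrow> graph_iso G' H \<Longrightarrow>
      (\<Sum>v\<in>fst G'. lam (Inl v)) + (\<Sum>e\<in>snd G'. lam (Inr e)) = c"
    using magic by blast
  have "(\<Sum>v\<in>fst G''. ?lam' (Inl v)) + (\<Sum>e\<in>snd G''. ?lam' (Inr e)) = c"
    if sub: "subgraph G'' ?G" and iso: "graph_iso G'' H" for G''
  proof -
    obtain G' where G': "subgraph G' G" "G'' = graph_image f G'"
      using subgraph_of_graph_image[OF inj edges sub] by blast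
    have "inj_on f (fst G')" "\<forall>e\<in>snd G'. e \<subseteq> fst G'"
      using G'(1) inj edges by (auto simp: subgraph_def intro: inj_on_subset)
    then have "graph_iso G' H"
      using iso graph_iso_graph_image_iff G'(2) by blast
    then show ?thesis
      using weight_graph_image[OF inj edges G'(1), of lam] c[OF G'(1)] by (simp add: G'(2) g_def)
  qed
  ultimately show ?thesis
    unfolding H_supermagic_labeling_def H_magic_labeling_def by blast
qed

lemma H_supermagic_graph_image:
  assumes "H_supermagic H G" "inj_on f (fst G)" "\<forall>e\<in>snd G. e \<subseteq> fst G"
  shows "H_supermagic H (graph_image f G)"
proof -
  obtain lam where "H_covering H G" "H_supermagic_labeling H G lam"
    using assms(1) unfolding H_supermagic_def by blast
  with assms(2,3) show ?thesis
    unfolding H_supermagic_def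
    by (blast intro: H_covering_graph_image H_supermagic_labeling_graph_image)
qed

section \<open>Complete graphs and triangles\<close>

definition complete_graph :: "'a set \<Rightarrow> 'a graph" where
  "complete_graph V = (V, {{u, v} | u v. u \<in> V \<and> v \<in> V \<and> u \<noteq> v})"

lemma fst_complete_graph [simp]: "fst (complete_graph V) = V"
  by (simp add: complete_graph_def)

lemma doubleton_mem_complete_graph_iff:
  "u \<in> V \<Longrightarrow> v \<in> V \<Longrightarrow> {u, v} \<in> snd (complete_graph V) \<longleftrightarrow> u \<noteq> v"
  by (auto simp: complete_graph_def doubleton_eq_iff)

lemma snd_complete_graph_triple:
  assumes "x \<noteq> y" "y \<noteq> z" "x \<noteq> z"
  shows "snd (complete_graph {x, y, z}) = {{x, y}, {y, z}, {x, z}}"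
proof
  show "snd (complete_graph {x, y, z}) \<subseteq> {{x, y}, {y, z}, {x, z}}"
    by (auto simp: complete_graph_def insert_commute)
  show "{{x, y}, {y, z}, {x, z}} \<subseteq> snd (complete_graph {x, y, z})"
    using assms doubleton_mem_complete_graph_iff[of _ "{x, y, z}"] by auto
qed

lemma simple_graph_complete_graph: "finite V \<Longrightarrow> simple_graph (complete_graph V)"
  unfolding simple_graph_def complete_graph_def by auto

lemma graph_iso_complete_graph:
  assumes "bij_betw f A B"
  shows "graph_iso (complete_graph A) (complete_graph B)"
proof -
  have "{u, v} \<in> snd (complete_graph A) \<longleftrightarrow> {f u, f v} \<in> snd (complete_graph B)"
    if "u \<in> A" "v \<in> A" for u v
  proof -
    have "f u \<in> B" "f v \<in> B"
      using that assms by (auto intro: bij_betw_apply)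
    then show ?thesis
      using that assms doubleton_mem_complete_graph_iff[of u A v] doubleton_mem_complete_graph_iff[of "f u" B "f v"]
      by (auto simp: bij_betw_def inj_on_eq_iff)
  qed
  with assms show ?thesis
    unfolding graph_iso_def by (auto simp: complete_graph_def)
qed

lemma cycle_graph_3: "cycle_graph 3 = complete_graph {0, 1, 2}"
proof -
  have "{{i, (i + 1) mod 3} | i::nat. i < 3} = (\<lambda>i. {i, (i + 1) mod 3}) ` {..<3}"
    by blast
  also have 3: "{..<3::nat} = {0, 1, 2}"
    by (auto simp: numeral_3_eq_3 less_Suc_eq)
  also have "(\<lambda>i::nat. {i, (i + 1) mod 3}) ` {0, 1, 2} = {{0, 1}, {1, 2}, {0, 2}}"
    by (auto simp: numeral_2_eq_2)
  also have "\<dots> = snd (complete_graph {0, 1, 2})"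
    by (rule snd_complete_graph_triple[symmetric]) simp_all
  finally show ?thesis
    by (simp add: cycle_graph_def complete_graph_def lessThan_atLeast0[symmetric] 3)
qed

lemma simple_graph_edges_subset: "simple_graph G \<Longrightarrow> \<forall>e\<in>snd G. e \<subseteq> fst G"
  unfolding simple_graph_def by fastforce

lemma simple_graph_subgraph:
  assumes "simple_graph G" "subgraph H G"
  shows "simple_graph H"
  using assms unfolding simple_graph_def subgraph_def
  by (metis (no_types, lifting) finite_subset insert_subset subsetD)

lemma graph_iso_cycle_graph_3_iff:
  assumes "simple_graph G"
  shows "graph_iso G (cycle_graph 3) \<longleftrightarrow> card (fst G) = 3 \<and> G = complete_graph (fst G)"
proof
  assume "graph_iso G (cycle_graph 3)"
  then obtain f where f: "bij_betw f (fst G) {0, 1, 2 :: nat}"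
    and f_edges: "\<forall>u\<in>fst G. \<forall>v\<in>fst G. {u, v} \<in> snd G \<longleftrightarrow> {f u, f v} \<in> snd (complete_graph {0, 1, 2})"
    unfolding graph_iso_def cycle_graph_3 by (auto simp: complete_graph_def)
  have "card (fst G) = 3"
    using bij_betw_same_card[OF f] by simp
  moreover have "snd G = snd (complete_graph (fst G))"
  proof
    show "snd G \<subseteq> snd (complete_graph (fst G))"
      using assms unfolding simple_graph_def complete_graph_def by fastforce
    show "snd (complete_graph (fst G)) \<subseteq> snd G"
    proof
      fix e assume "e \<in> snd (complete_graph (fst G))"
      then obtain u v where e: "e = {u, v}" and uv: "u \<in> fst G" "v \<in> fst G" "u \<noteq> v"
        by (auto simp: complete_graph_def)
      have "f u \<noteq> f v"
        using f uv by (metis bij_betw_def inj_on_def)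
      moreover have "f u \<in> {0, 1, 2}" "f v \<in> {0, 1, 2}"
        using bij_betw_apply[OF f] uv by blast+
      ultimately show "e \<in> snd G"
        using f_edges uv e doubleton_mem_complete_graph_iff[of "f u" "{0, 1, 2}" "f v"] by blast
    qed
  qed
  ultimately show "card (fst G) = 3 \<and> G = complete_graph (fst G)"
    by (simp add: complete_graph_def prod_eq_iff)
next
  assume "card (fst G) = 3 \<and> G = complete_graph (fst G)"
  then obtain V where V: "G = complete_graph V" "card V = 3"
    by blast
  then have "finite V"
    using card.infinite by fastforce
  with V obtain f where "bij_betw f V {0, 1, 2 :: nat}"
    using finite_same_card_bij[of V "{0, 1, 2 :: nat}"] by auto
  then show "graph_iso G (cycle_graph 3)"
    unfolding V cycle_graph_3 by (rule graph_iso_complete_graph)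
qed

section \<open>The triangular ladder as the square of a path\<close>

definition path_square :: "nat \<Rightarrow> nat graph" where
  "path_square N = ({..<N}, {{p, p + 1} | p. p + 1 < N} \<union> {{p, p + 2} | p. p + 2 < N})"

text \<open>\<open>u\<^sub>i = (False, i)\<close> and \<open>v\<^sub>i = (True, i)\<close> sit at positions \<open>2i - 2\<close> and \<open>2i - 1\<close> of the walk
  \<open>u\<^sub>1 v\<^sub>1 u\<^sub>2 v\<^sub>2 \<dots>\<close>; rungs and diagonals then join consecutive positions, rails positions
  two apart.\<close>

definition zigzag :: "nat \<Rightarrow> bool \<times> nat" where
  "zigzag p = (odd p, p div 2 + 1)"

lemma inj_zigzag: "inj zigzag"
proof (rule injI)
  fix p q assume "zigzag p = zigzag q"
  then have "odd p = odd q" "p div 2 = q div 2"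
    by (simp_all add: zigzag_def)
  then show "p = q"
    by (metis div_mult_mod_eq odd_iff_mod_2_eq_one parity_cases)
qed

lemma nat_parity_cases:
  fixes p :: nat
  obtains t where "p = 2 * t" | t where "p = 2 * t + 1"
  by (metis oddE evenE)

lemma fst_triangular_ladder: "fst (triangular_ladder n) = zigzag ` {..<2 * n}"
proof (rule set_eqI, rule iffI)
  fix v assume "v \<in> fst (triangular_ladder n)"
  then obtain b t where "v = (b, t + 1)" "t < n"
    by (auto simp: triangular_ladder_def) (metis Suc_le_D)
  then have "v = zigzag (2 * t + of_bool b)" "2 * t + of_bool b < 2 * n"
    by (auto simp: zigzag_def)
  then show "v \<in> zigzag ` {..<2 * n}"
    by blast
qed (auto simp: triangular_ladder_def zigzag_def)

lemma zigzag_image_short_edges: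
  "(`) zigzag ` {{p, p + 1} | p. p + 1 < 2 * n} =
    {{(False, i), (True, i)} | i. 1 \<le> i \<and> i \<le> n} \<union> {{(False, i + 1), (True, i)} | i. 1 \<le> i \<and> i \<le> n - 1}"
proof (rule set_eqI, rule iffI)
  fix e assume "e \<in> (`) zigzag ` {{p, p + 1} | p. p + 1 < 2 * n}"
  then obtain p where e: "e = {zigzag p, zigzag (p + 1)}" "p + 1 < 2 * n"
    by auto
  show "e \<in> {{(False, i), (True, i)} | i. 1 \<le> i \<and> i \<le> n} \<union> {{(False, i + 1), (True, i)} | i. 1 \<le> i \<and> i \<le> n - 1}"
  proof (cases p rule: nat_parity_cases)
    case (1 t)
    then show ?thesis
      using e by (intro UnI1 CollectI exI[where x = "t + 1"]) (simp add: zigzag_def)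
  next
    case (2 t)
    then show ?thesis
      using e by (intro UnI2 CollectI exI[where x = "t + 1"]) (simp add: zigzag_def insert_commute)
  qed
next
  fix e assume "e \<in> {{(False, i), (True, i)} | i. 1 \<le> i \<and> i \<le> n} \<union> {{(False, i + 1), (True, i)} | i. 1 \<le> i \<and> i \<le> n - 1}"
  then consider (rung) i where "e = {(False, i), (True, i)}" "1 \<le> i" "i \<le> n"
    | (diagonal) i where "e = {(False, i + 1), (True, i)}" "1 \<le> i" "i \<le> n - 1"
    by blast
  then show "e \<in> (`) zigzag ` {{p, p + 1} | p. p + 1 < 2 * n}"
  proof cases
    case rung
    then obtain t where "i = t + 1" by (metis le_add_diff_inverse2)
    then show ?thesis
      using rung by (intro image_eqI[where x = "{2 * t, 2 * t + 1}"] CollectI exI[where x = "2 * t"])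
        (auto simp: zigzag_def)
  next
    case diagonal
    then obtain t where "i = t + 1" by (metis le_add_diff_inverse2)
    then show ?thesis
      using diagonal by (intro image_eqI[where x = "{2 * t + 1, 2 * t + 2}"] CollectI exI[where x = "2 * t + 1"])
        (auto simp: zigzag_def)
  qed
qed

lemma zigzag_image_long_edges:
  "(`) zigzag ` {{p, p + 2} | p. p + 2 < 2 * n} =
    {{(False, i), (False, i + 1)} | i. 1 \<le> i \<and> i \<le> n - 1} \<union> {{(True, i), (True, i + 1)} | i. 1 \<le> i \<and> i \<le> n - 1}"
proof (rule set_eqI, rule iffI)
  fix e assume "e \<in> (`) zigzag ` {{p, p + 2} | p. p + 2 < 2 * n}"
  then obtain p where e: "e = {zigzag p, zigzag (p + 2)}" "p + 2 < 2 * n"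
    by auto
  show "e \<in> {{(False, i), (False, i + 1)} | i. 1 \<le> i \<and> i \<le> n - 1} \<union> {{(True, i), (True, i + 1)} | i. 1 \<le> i \<and> i \<le> n - 1}"
  proof (cases p rule: nat_parity_cases)
    case (1 t)
    then show ?thesis
      using e by (intro UnI1 CollectI exI[where x = "t + 1"]) (simp add: zigzag_def)
  next
    case (2 t)
    then show ?thesis
      using e by (intro UnI2 CollectI exI[where x = "t + 1"]) (simp add: zigzag_def)
  qed
next
  fix e assume "e \<in> {{(False, i), (False, i + 1)} | i. 1 \<le> i \<and> i \<le> n - 1} \<union> {{(True, i), (True, i + 1)} | i. 1 \<le> i \<and> i \<le> n - 1}"
  then obtain b i where e: "e = {(b, i), (b, i + 1)}" "1 \<le> i" "i \<le> n - 1"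
    by blast
  then obtain t where "i = t + 1" by (metis le_add_diff_inverse2)
  then show "e \<in> (`) zigzag ` {{p, p + 2} | p. p + 2 < 2 * n}"
    using e by (intro image_eqI[where x = "{2 * t + of_bool b, 2 * t + of_bool b + 2}"]
        CollectI exI[where x = "2 * t + of_bool b"]) (auto simp: zigzag_def)
qed

lemma triangular_ladder_eq_graph_image:
  "triangular_ladder n = graph_image zigzag (path_square (2 * n))"
proof -
  have "snd (triangular_ladder n) = (`) zigzag ` snd (path_square (2 * n))"
    unfolding path_square_def triangular_ladder_def snd_conv image_Un
      zigzag_image_short_edges zigzag_image_long_edges by blast
  with fst_triangular_ladder show ?thesis
    by (simp add: graph_image_def path_square_def prod_eq_iff)
qed

lemma copies_graph_image:
  "copies m (graph_image f G) = graph_image (map_prod id f) (copies m G)"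
proof -
  have "fst (copies m (graph_image f G)) = fst (graph_image (map_prod id f) (copies m G))"
    by (force simp: copies_def graph_image_def)
  moreover have "snd (copies m (graph_image f G)) = {Pair j ` f ` e | j e. j < m \<and> e \<in> snd G}"
    by (auto simp: copies_def graph_image_def)
  moreover have "\<dots> = {map_prod id f ` Pair j ` e | j e. j < m \<and> e \<in> snd G}"
    by (simp add: image_image)
  moreover have "\<dots> = snd (graph_image (map_prod id f) (copies m G))"
    by (auto simp: copies_def graph_image_def)
  ultimately show ?thesis
    by (simp add: prod_eq_iff)
qed

lemma simple_graph_copies:
  assumes "simple_graph G"
  shows "simple_graph (copies m G)"
proof -
  have "fst (copies m G) \<subseteq> {..<m} \<times> fst G"
    by (auto simp: copies_def)
  then have "finite (fst (copies m G))"
    using assms by (auto simp: simple_graph_def intro: finite_subset)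
  moreover have "\<exists>u v. e = {u, v} \<and> u \<noteq> v \<and> u \<in> fst (copies m G) \<and> v \<in> fst (copies m G)"
    if e: "e \<in> snd (copies m G)" for e
  proof -
    obtain j u v where "e = Pair j ` {u, v}" "j < m" "u \<noteq> v" "u \<in> fst G" "v \<in> fst G"
      using e assms by (auto simp: copies_def simple_graph_def)
    then show ?thesis
      by (intro exI[where x = "(j, u)"] exI[where x = "(j, v)"]) (simp add: copies_def)
  qed
  ultimately show ?thesis
    unfolding simple_graph_def by blast
qed

lemma simple_graph_path_square: "simple_graph (path_square N)"
  unfolding simple_graph_def path_square_def by force

lemma fst_copies_path_square: "fst (copies m (path_square N)) = {..<m} \<times> {..<N}"
  by (auto simp: copies_def path_square_def)

lemma snd_copies_path_square:
  "snd (copies m (path_square N)) =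
     (\<lambda>(j, p). {(j, p), (j, p + 1)}) ` ({..<m} \<times> {..<N - 1}) \<union>
     (\<lambda>(j, p). {(j, p), (j, p + 2)}) ` ({..<m} \<times> {..<N - 2})"
proof -
  have path: "snd (path_square N) = (\<lambda>p. {p, p + 1}) ` {..<N - 1} \<union> (\<lambda>p. {p, p + 2}) ` {..<N - 2}"
    unfolding path_square_def by auto
  have copies: "snd (copies m G) = (\<lambda>(j, e). Pair j ` e) ` ({..<m} \<times> snd G)" for G :: "'a graph"
    unfolding copies_def by auto
  have times_image: "A \<times> g ` I = map_prod id g ` (A \<times> I)" for A :: "nat set" and g :: "nat \<Rightarrow> nat set" and I
    by (simp add: map_prod_surj_on)
  show ?thesis
    unfolding copies path Sigma_Un_distrib2 image_Un times_image image_image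
    by (simp add: case_prod_unfold)
qed

lemma edge_of_copies_path_square:
  assumes "{x, y} \<in> snd (copies m (path_square N))"
  obtains j p q where "x = (j, p)" "y = (j, q)" "j < m" "p < N" "q < N" "p \<le> q + 2" "q \<le> p + 2"
  using assms unfolding snd_copies_path_square by (auto simp: doubleton_eq_iff)

section \<open>The labeling\<close>

lemma bij_betw_image_of_comp: "bij_betw (g \<circ> f) A C \<Longrightarrow> bij_betw g (f ` A) C"
  by (simp add: bij_betw_def inj_on_imageI image_comp)

lemma bij_betw_mixed_radix: "bij_betw (\<lambda>(j, p). m * p + j :: nat) ({..<m} \<times> {..<K}) {..<m * K}"
proof (rule bij_betw_byWitness[where f' = "\<lambda>x. (x mod m, x div m)"])
  show "(\<lambda>(j, p). m * p + j) ` ({..<m} \<times> {..<K}) \<subseteq> {..<m * K}"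
  proof clarsimp
    fix j p assume "j < m" "p < K"
    then have "m * p + j < m * (p + 1)" by simp
    also have "\<dots> \<le> m * K" using \<open>p < K\<close> by (intro mult_le_mono2) simp
    finally show "m * p + j < m * K" .
  qed
  show "(\<lambda>x. (x mod m, x div m)) ` {..<m * K} \<subseteq> {..<m} \<times> {..<K}"
  proof clarsimp
    fix x assume "x < m * K"
    then have "0 < m" by (cases m) auto
    with \<open>x < m * K\<close> show "x mod m < m \<and> x div m < K"
      by (simp add: less_mult_imp_div_less mult.commute)
  qed
qed auto

lemma bij_betw_reverse_interval: "bij_betw (\<lambda>x. c + n - x) {..<n} {c + 1..c + (n::nat)}"
  by (rule bij_betw_byWitness[where f' = "\<lambda>x. c + n - x"]) auto

text \<open>An edge \<open>{(j, p), (j, q)}\<close> with \<open>q \<in> {p + 1, p + 2}\<close> is recovered from \<open>j\<close> and \<open>p + q\<close>,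
  whose parity tells the two kinds of edges apart.\<close>

definition square_label :: "nat \<Rightarrow> nat \<Rightarrow> (nat \<times> nat) + (nat \<times> nat) set \<Rightarrow> nat" where
  "square_label m N z = (case z of
      Inl (j, p) \<Rightarrow> 1 + (m * p + j)
    | Inr e \<Rightarrow> (let j = (\<Sum>x\<in>e. fst x) div 2; s = \<Sum>x\<in>e. snd x in
        if odd s then m * N + m * (N - 1) - (m * (s div 2) + j)
        else m * N + m * (N - 1) + m * (N - 2) - (m * (s div 2 - 1) + j)))"

lemma square_label_vertex: "square_label m N (Inl (j, p)) = 1 + (m * p + j)"
  by (simp add: square_label_def)

lemma square_label_short_edge:
  "square_label m N (Inr {(j, p), (j, p + 1)}) = m * N + m * (N - 1) - (m * p + j)"
  by (simp add: square_label_def)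

lemma square_label_long_edge:
  "square_label m N (Inr {(j, p), (j, p + 2)}) = m * N + m * (N - 1) + m * (N - 2) - (m * p + j)"
  by (simp add: square_label_def)

lemma bij_betw_square_label_vertices:
  "bij_betw (square_label m N) (Inl ` fst (copies m (path_square N))) {1..m * N}"
proof -
  have "bij_betw (\<lambda>x. 1 + x) {..<m * N} {1..m * N}"
    using inj_on_imp_bij_betw[of Suc "{..<m * N}"] by (simp add: image_Suc_lessThan)
  with bij_betw_mixed_radix
  have "bij_betw ((\<lambda>x. 1 + x) \<circ> (\<lambda>(j, p). m * p + j)) ({..<m} \<times> {..<N}) {1..m * N}"
    by (rule bij_betw_trans)
  then have "bij_betw (square_label m N \<circ> Inl) ({..<m} \<times> {..<N}) {1..m * N}"
    by (rule bij_betw_cong[THEN iffD1, rotated]) (auto simp: square_label_vertex)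
  then show ?thesis
    unfolding fst_copies_path_square by (rule bij_betw_image_of_comp)
qed

lemma bij_betw_square_label_edges:
  "bij_betw (square_label m N) (Inr ` snd (copies m (path_square N)))
     {m * N + 1..m * N + (m * (N - 1) + m * (N - 2))}"
proof -
  have "bij_betw ((\<lambda>x. m * N + m * (N - 1) - x) \<circ> (\<lambda>(j, p). m * p + j)) ({..<m} \<times> {..<N - 1})
      {m * N + 1..m * N + m * (N - 1)}"
    using bij_betw_mixed_radix bij_betw_reverse_interval by (rule bij_betw_trans)
  then have "bij_betw (square_label m N \<circ> (Inr \<circ> (\<lambda>(j, p). {(j, p), (j, p + 1)}))) ({..<m} \<times> {..<N - 1})
      {m * N + 1..m * N + m * (N - 1)}"
    by (rule bij_betw_cong[THEN iffD1, rotated]) (auto simp: square_label_def)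
  from bij_betw_image_of_comp[OF this]
  have short: "bij_betw (square_label m N) (Inr ` (\<lambda>(j, p). {(j, p), (j, p + 1)}) ` ({..<m} \<times> {..<N - 1}))
      {m * N + 1..m * N + m * (N - 1)}"
    by (simp add: image_comp)
  have "bij_betw ((\<lambda>x. m * N + m * (N - 1) + m * (N - 2) - x) \<circ> (\<lambda>(j, p). m * p + j))
      ({..<m} \<times> {..<N - 2}) {m * N + m * (N - 1) + 1..m * N + m * (N - 1) + m * (N - 2)}"
    using bij_betw_mixed_radix bij_betw_reverse_interval by (rule bij_betw_trans)
  then have "bij_betw (square_label m N \<circ> (Inr \<circ> (\<lambda>(j, p). {(j, p), (j, p + 2)}))) ({..<m} \<times> {..<N - 2})
      {m * N + m * (N - 1) + 1..m * N + m * (N - 1) + m * (N - 2)}"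
    by (rule bij_betw_cong[THEN iffD1, rotated]) (auto simp: square_label_def)
  from bij_betw_image_of_comp[OF this]
  have long: "bij_betw (square_label m N) (Inr ` (\<lambda>(j, p). {(j, p), (j, p + 2)}) ` ({..<m} \<times> {..<N - 2}))
      {m * N + m * (N - 1) + 1..m * N + m * (N - 1) + m * (N - 2)}"
    by (simp add: image_comp)
  have "{m * N + 1..m * N + m * (N - 1)} \<union> {m * N + m * (N - 1) + 1..m * N + m * (N - 1) + m * (N - 2)}
      = {m * N + 1..m * N + (m * (N - 1) + m * (N - 2))}"
    by auto
  with bij_betw_combine[OF short long] show ?thesis
    unfolding snd_copies_path_square image_Un by auto
qed

section \<open>Triangles\<close>

definition copy_triangle :: "nat \<Rightarrow> nat \<Rightarrow> (nat \<times> nat) graph" where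
  "copy_triangle j p = complete_graph {(j, p), (j, p + 1), (j, p + 2)}"

lemma snd_copy_triangle:
  "snd (copy_triangle j p) = {{(j, p), (j, p + 1)}, {(j, p + 1), (j, p + 2)}, {(j, p), (j, p + 2)}}"
  unfolding copy_triangle_def by (rule snd_complete_graph_triple) simp_all

lemma graph_iso_copy_triangle: "graph_iso (copy_triangle j p) (cycle_graph 3)"
  unfolding copy_triangle_def
  by (subst graph_iso_cycle_graph_3_iff) (simp_all add: simple_graph_complete_graph)

lemma subgraph_copy_triangle:
  assumes "j < m" "p + 2 < N"
  shows "subgraph (copy_triangle j p) (copies m (path_square N))"
proof -
  have "{(j, p), (j, p + 1)} \<in> snd (copies m (path_square N))"
    "{(j, p + 1), (j, p + 1 + 1)} \<in> snd (copies m (path_square N))"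
    "{(j, p), (j, p + 2)} \<in> snd (copies m (path_square N))"
    unfolding snd_copies_path_square using assms by force+
  then show ?thesis
    using assms unfolding subgraph_def snd_copy_triangle
    by (auto simp: copy_triangle_def complete_graph_def fst_copies_path_square)
qed

lemma copy_triangle_label_sum:
  assumes "j < m" "p + 2 < N"
  shows "(\<Sum>v\<in>fst (copy_triangle j p). square_label m N (Inl v)) +
         (\<Sum>e\<in>snd (copy_triangle j p). square_label m N (Inr e))
       = 3 + 2 * m + 3 * (m * N) + 3 * (m * (N - 1)) + m * (N - 2)"
proof -
  have "m * (p + 2) \<le> m * (N - 1)"
    using assms by (intro mult_le_mono2) simp
  then have "m * p + 2 * m \<le> m * (N - 1)"
    by (simp add: algebra_simps)
  moreover have "(\<Sum>v\<in>fst (copy_triangle j p). square_label m N (Inl v)) = 3 + 3 * (m * p) + 3 * m + 3 * j"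
    by (simp add: copy_triangle_def complete_graph_def square_label_vertex algebra_simps)
  moreover have "(\<Sum>e\<in>snd (copy_triangle j p). square_label m N (Inr e)) =
      (m * N + m * (N - 1) - (m * p + j)) + (m * N + m * (N - 1) - (m * (p + 1) + j))
      + (m * N + m * (N - 1) + m * (N - 2) - (m * p + j))"
    unfolding snd_copy_triangle
    by (simp add: doubleton_eq_iff square_label_short_edge[of m N j "p + 1", simplified]
        square_label_short_edge[of m N j p, simplified] square_label_long_edge[of m N j p, simplified])
  ultimately show ?thesis
    using assms(1) by (simp add: algebra_simps)
qed

lemma consecutive_if_pairwise_close:
  fixes a b c :: nat
  assumes "a \<noteq> b" "b \<noteq> c" "a \<noteq> c"
    and "a \<le> b + 2" "b \<le> a + 2" "b \<le> c + 2" "c \<le> b + 2" "a \<le> c + 2" "c \<le> a + 2"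
  obtains p where "{a, b, c} = {p, p + 1, p + 2}"
proof
  show "{a, b, c} = {min a (min b c), min a (min b c) + 1, min a (min b c) + 2}"
    using assms by (auto simp: min_def)
qed

lemma C3_subgraph_of_copies_path_square:
  assumes sub: "subgraph G (copies m (path_square N))" and iso: "graph_iso G (cycle_graph 3)"
  obtains j p where "j < m" "p + 2 < N" "G = copy_triangle j p"
proof -
  have "simple_graph G"
    using simple_graph_subgraph[OF simple_graph_copies[OF simple_graph_path_square] sub] .
  then have card: "card (fst G) = 3" and complete: "G = complete_graph (fst G)"
    using iso graph_iso_cycle_graph_3_iff by blast+
  obtain a b c where abc: "fst G = {a, b, c}" "a \<noteq> b" "b \<noteq> c" "a \<noteq> c"
    using card unfolding card_3_iff by blast
  have snd_G: "snd G = snd (complete_graph (fst G))"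
    using arg_cong[OF complete, of snd] .
  have edge: "{x, y} \<in> snd (copies m (path_square N))" if "x \<in> fst G" "y \<in> fst G" "x \<noteq> y" for x y
  proof -
    have "{x, y} \<in> snd G"
      using that snd_G doubleton_mem_complete_graph_iff[of x "fst G" y] by simp
    then show ?thesis
      using sub by (auto simp: subgraph_def)
  qed
  have mem: "a \<in> fst G" "b \<in> fst G" "c \<in> fst G"
    using abc by auto
  obtain j pa pb where ab: "a = (j, pa)" "b = (j, pb)" "j < m" "pa < N" "pb < N" "pa \<le> pb + 2" "pb \<le> pa + 2"
    using edge_of_copies_path_square[OF edge[OF mem(1,2) abc(2)]] .
  obtain j' pa' pc where ac: "a = (j', pa')" "c = (j', pc)" "j' < m" "pa' < N" "pc < N" "pa' \<le> pc + 2" "pc \<le> pa' + 2"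
    using edge_of_copies_path_square[OF edge[OF mem(1,3) abc(4)]] .
  obtain j'' pb' pc' where bc: "b = (j'', pb')" "c = (j'', pc')" "j'' < m" "pb' < N" "pc' < N" "pb' \<le> pc' + 2" "pc' \<le> pb' + 2"
    using edge_of_copies_path_square[OF edge[OF mem(2,3) abc(3)]] .
  have same: "j' = j" "pa' = pa" "j'' = j" "pb' = pb" "pc' = pc"
    using ab ac bc by simp_all
  obtain p where p: "{pa, pb, pc} = {p, p + 1, p + 2}"
    using consecutive_if_pairwise_close[of pa pb pc] abc ab ac bc unfolding same by auto
  have "fst G = Pair j ` {pa, pb, pc}"
    using abc ab ac unfolding same by simp
  then have "fst G = {(j, p), (j, p + 1), (j, p + 2)}"
    unfolding p by simp
  then have "G = copy_triangle j p"
    unfolding copy_triangle_def by (rule trans[OF complete arg_cong[where f = complete_graph]])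
  moreover have "p + 2 \<in> {pa, pb, pc}"
    unfolding p by simp
  then have "p + 2 < N"
    using ab ac unfolding same by auto
  ultimately show ?thesis
    using that ab by blast
qed

lemma C3_covering_copies_path_square:
  assumes "3 \<le> N"
  shows "H_covering (cycle_graph 3) (copies m (path_square N))"
  unfolding H_covering_def
proof
  fix e assume "e \<in> snd (copies m (path_square N))"
  then consider (short) j p where "e = {(j, p), (j, p + 1)}" "j < m" "p + 1 < N"
    | (long) j p where "e = {(j, p), (j, p + 2)}" "j < m" "p + 2 < N"
    unfolding snd_copies_path_square by fastforce
  then obtain j p where "j < m" "p + 2 < N" "e \<in> snd (copy_triangle j p)"
  proof cases
    case short
    show ?thesis
    proof (cases "p + 2 < N")
      case True
      with short show ?thesis
        using that by (simp add: snd_copy_triangle)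
    next
      case False
      with short assms obtain q where "p = q + 1" "q + 2 < N"
        by (cases p) auto
      with short show ?thesis
        using that[of j q] by (simp add: snd_copy_triangle)
    qed
  next
    case long
    then show ?thesis
      using that by (simp add: snd_copy_triangle)
  qed
  then show "\<exists>G'. subgraph G' (copies m (path_square N)) \<and> graph_iso G' (cycle_graph 3) \<and> e \<in> snd G'"
    using subgraph_copy_triangle graph_iso_copy_triangle by blast
qed

lemma C3_supermagic_labeling_copies_path_square:
  "H_supermagic_labeling (cycle_graph 3) (copies m (path_square N)) (square_label m N)"
proof -
  let ?Q = "copies m (path_square N)"
  have card_V: "card (fst ?Q) = m * N"
    using bij_betw_same_card[OF bij_betw_square_label_vertices] by (simp add: card_image)
  have card_E: "card (snd ?Q) = m * (N - 1) + m * (N - 2)"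
    using bij_betw_same_card[OF bij_betw_square_label_edges] by (simp add: card_image)
  have "bij_betw (square_label m N) (Inl ` fst ?Q \<union> Inr ` snd ?Q)
      ({1..m * N} \<union> {m * N + 1..m * N + (m * (N - 1) + m * (N - 2))})"
    by (rule bij_betw_combine[OF bij_betw_square_label_vertices bij_betw_square_label_edges]) auto
  moreover have "{1..m * N} \<union> {m * N + 1..m * N + (m * (N - 1) + m * (N - 2))}
      = {1..card (fst ?Q) + card (snd ?Q)}"
    unfolding card_V card_E by auto
  moreover have "square_label m N ` Inl ` fst ?Q = {1..card (fst ?Q)}"
    using bij_betw_square_label_vertices unfolding card_V by (rule bij_betw_imp_surj_on)
  moreover have "(\<Sum>v\<in>fst G. square_label m N (Inl v)) + (\<Sum>e\<in>snd G. square_label m N (Inr e))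
      = 3 + 2 * m + 3 * (m * N) + 3 * (m * (N - 1)) + m * (N - 2)"
    if "subgraph G ?Q" "graph_iso G (cycle_graph 3)" for G
    using C3_subgraph_of_copies_path_square[OF that] copy_triangle_label_sum by metis
  ultimately show ?thesis
    unfolding H_supermagic_labeling_def H_magic_labeling_def by auto
qed

theorem C3_supermagic_copies_path_square:
  "3 \<le> N \<Longrightarrow> H_supermagic (cycle_graph 3) (copies m (path_square N))"
  unfolding H_supermagic_def
  using C3_covering_copies_path_square C3_supermagic_labeling_copies_path_square by blast

theorem theorem4:
  fixes m n :: nat
  assumes "m \<ge> 2" and "n \<ge> 3"
  shows "H_supermagic (cycle_graph 3) (copies m (triangular_ladder n))"
proof -
  have "copies m (triangular_ladder n) = graph_image (map_prod id zigzag) (copies m (path_square (2 * n)))"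
    by (simp add: triangular_ladder_eq_graph_image copies_graph_image)
  moreover have "H_supermagic (cycle_graph 3) (copies m (path_square (2 * n)))"
    using assms(2) by (intro C3_supermagic_copies_path_square) simp
  moreover have "inj_on (map_prod id zigzag) (fst (copies m (path_square (2 * n))))"
    unfolding fst_copies_path_square
    by (rule map_prod_inj_on) (simp_all add: inj_on_subset[OF inj_zigzag])
  moreover have "\<forall>e\<in>snd (copies m (path_square (2 * n))). e \<subseteq> fst (copies m (path_square (2 * n)))"
    by (rule simple_graph_edges_subset[OF simple_graph_copies[OF simple_graph_path_square]])
  ultimately show ?thesis
    by (metis H_supermagic_graph_image)
qed

end
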